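(* Let $\mathbb{D}$ be $[0,1]^2$ or a mesh, and let $A,B:\mathbb{D}\to\mathbb{R}$ satisfy (Q1) $A\le B$ and (Q2) $L^{(A,B)}(R)\ge0$ for all $R\in\mathfrak{R}$. Suppose $\mathbf{x}\in\mathbb{D}$ satisfies $t_0=\gamma^{(A,B)}(\mathbf{x})>0$. For $0<t\le t_0$ define $A':\mathbb{D}\to\mathbb{R}$ by $A'(\mathbf{x})=A(\mathbf{x})+t$ and $A'(\mathbf{y})=A(\mathbf{y})$ for $\mathbf{y}\ne\mathbf{x}$. Then $(A',B)$ satisfies (Q1) and (Q2). Moreover, if $t=t_0$, then $\gamma^{(A',B)}(\mathbf{x})=0$.
   Context: A rectangle is $[s_1,s_2]\times[t_1,t_2]$ with $s_1<s_2$, $t_1<t_2$ and all four corners in $\mathbb{D}$; its main corners are the southwest $(s_1,t_1)$ and northeast $(s_2,t_2)$, its opposite corners the southeast $(s_2,t_1)$ and northwest $(s_1,t_2)$. $\mathfrak{R}$ is the set of finite formal unions $R=R_1\sqcup\dots\sqcup R_n$ of rectangles (repetitions allowed). The multiplicity of a point $\mathbf{y}$ is $m_R(\mathbf{y})=\sum_{i=1}^n m_{R_i}(\mathbf{y})$, where for a single rectangle $m_{R_i}(\mathbf{y})=1$ if $\mathbf{y}$ is a main corner, $-1$ if an opposite corner, $0$ otherwise. For real functions $A,B$ on $\mathbb{D}$: $L^{(A,B)}(R)=\sum_{m_R(\mathbf{y})>0}B(\mathbf{y})m_R(\mathbf{y})+\sum_{m_R(\mathbf{y})<0}A(\mathbf{y})m_R(\mathbf{y})$;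 $P_M^{(A,B)}(\mathbf{x})=\inf\{L^{(A,B)}(R)/m_R(\mathbf{x}):R\in\mathfrak{R},m_R(\mathbf{x})>0\}$; $P_O^{(A,B)}(\mathbf{x})=\inf\{L^{(A,B)}(R)/(-m_R(\mathbf{x})):R\in\mathfrak{R},m_R(\mathbf{x})<0\}$, with $\inf\emptyset=+\infty$; and $\gamma^{(A,B)}(\mathbf{x})=\min\{P_O^{(A,B)}(\mathbf{x}),B(\mathbf{x})-A(\mathbf{x})\}$. *)

theory Defs
  imports Complex_Main "HOL-Library.Extended_Real"
begin

type_synonym point = "real \<times> real"
(* a rectangle [s1,s2] x [t1,t2] is represented by (southwest corner, northeast corner) *)
type_synonym rect = "point \<times> point"

definition sw :: "rect \<Rightarrow> point" where "sw r = fst r"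
definition ne :: "rect \<Rightarrow> point" where "ne r = snd r"
definition se :: "rect \<Rightarrow> point" where "se r = (fst (snd r), snd (fst r))"
definition nw :: "rect \<Rightarrow> point" where "nw r = (fst (fst r), snd (snd r))"

definition is_domain :: "point set \<Rightarrow> bool" where
  "is_domain D \<longleftrightarrow> D = {0..1} \<times> {0..1} \<or>
     (\<exists>I J. finite I \<and> finite J \<and> {0,1} \<subseteq> I \<and> {0,1} \<subseteq> J \<and>
            I \<subseteq> {0..1} \<and> J \<subseteq> {0..1} \<and> D = I \<times> J)"

definition is_rect :: "point set \<Rightarrow> rect \<Rightarrow> bool" where
  "is_rect D r \<longleftrightarrow> fst (sw r) < fst (ne r) \<and> snd (sw r) < snd (ne r) \<and>
     sw r \<in> D \<and> ne r \<in> D \<and> se r \<in> D \<and> nw r \<in> D"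

(* finite formal unions of rectangles (repetitions allowed) *)
definition rect_unions :: "point set \<Rightarrow> rect list set" where
  "rect_unions D = {R. \<forall>r\<in>set R. is_rect D r}"

definition mult_rect :: "rect \<Rightarrow> point \<Rightarrow> int" where
  "mult_rect r y = (if y = sw r \<or> y = ne r then 1
                    else if y = se r \<or> y = nw r then -1 else 0)"

definition mult :: "rect list \<Rightarrow> point \<Rightarrow> int" where
  "mult R y = sum_list (map (\<lambda>r. mult_rect r y) R)"

definition corners :: "rect \<Rightarrow> point set" where
  "corners r = {sw r, ne r, se r, nw r}"

(* only corners of the rectangles can have nonzero multiplicity *)
definition Lval :: "(point \<Rightarrow> real) \<Rightarrow> (point \<Rightarrow> real) \<Rightarrow> rect list \<Rightarrow> real" where
  "Lval A B R = (\<Sum>y\<in>\<Union>(corners ` set R).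
      (if mult R y > 0 then B y * of_int (mult R y)
       else if mult R y < 0 then A y * of_int (mult R y) else 0))"

definition P_M :: "point set \<Rightarrow> (point \<Rightarrow> real) \<Rightarrow> (point \<Rightarrow> real) \<Rightarrow> point \<Rightarrow> ereal" where
  "P_M D A B x = Inf {ereal (Lval A B R / of_int (mult R x)) | R. R \<in> rect_unions D \<and> mult R x > 0}"

definition P_O :: "point set \<Rightarrow> (point \<Rightarrow> real) \<Rightarrow> (point \<Rightarrow> real) \<Rightarrow> point \<Rightarrow> ereal" where
  "P_O D A B x = Inf {ereal (Lval A B R / of_int (- mult R x)) | R. R \<in> rect_unions D \<and> mult R x < 0}"

definition gamma :: "point set \<Rightarrow> (point \<Rightarrow> real) \<Rightarrow> (point \<Rightarrow> real) \<Rightarrow> point \<Rightarrow> ereal" where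
  "gamma D A B x = min (P_O D A B x) (ereal (B x - A x))"

definition Q1 :: "point set \<Rightarrow> (point \<Rightarrow> real) \<Rightarrow> (point \<Rightarrow> real) \<Rightarrow> bool" where
  "Q1 D A B \<longleftrightarrow> (\<forall>y\<in>D. A y \<le> B y)"

definition Q2 :: "point set \<Rightarrow> (point \<Rightarrow> real) \<Rightarrow> (point \<Rightarrow> real) \<Rightarrow> bool" where
  "Q2 D A B \<longleftrightarrow> (\<forall>R\<in>rect_unions D. Lval A B R \<ge> 0)"

end

theory Submission
  imports Defs
begin

text \<open>Raising \<open>A\<close> by \<open>t\<close> at the single point \<open>x\<close> only changes the terms of \<open>L\<close> at
  opposite corners \<open>x\<close>, so every quotient in the infimum defining \<open>P_O\<close> at \<open>x\<close>, and with
  it \<open>\<gamma>\<close> at \<open>x\<close>, drops by exactly \<open>t\<close>. Hence \<open>t \<le> \<gamma>\<close> keeps all quotients and \<open>B x - A x\<close>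
  nonnegative, giving (Q1) and (Q2), and \<open>t = \<gamma>\<close> leaves \<open>\<gamma> = 0\<close>.\<close>

lemma Inf_ereal_minus_real:
  fixes S :: "ereal set"
  shows "(INF e\<in>S. e - ereal c) = Inf S - ereal c"
proof (rule antisym)
  show "Inf S - ereal c \<le> (INF e\<in>S. e - ereal c)"
    by (intro INF_greatest ereal_minus_mono Inf_lower) auto
  have "(INF e\<in>S. e - ereal c) + ereal c \<le> Inf S"
  proof (rule Inf_greatest)
    fix e assume "e \<in> S"
    then have "(INF e\<in>S. e - ereal c) \<le> e - ereal c" by (rule INF_lower)
    then show "(INF e\<in>S. e - ereal c) + ereal c \<le> e"
      by (cases e; cases "INF e\<in>S. e - ereal c") auto
  qed
  then show "(INF e\<in>S. e - ereal c) \<le> Inf S - ereal c"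
    by (simp add: ereal_le_minus_iff)
qed

lemma mult_nonzero_imp_corner: "mult R y \<noteq> 0 \<Longrightarrow> y \<in> \<Union>(corners ` set R)"
proof (induction R)
  case Nil
  then show ?case by (simp add: mult_def)
next
  case (Cons r R)
  then show ?case
    by (auto simp: mult_def mult_rect_def corners_def split: if_splits)
qed

lemma Lval_fun_upd_shift:
  "Lval (A(x := A x + t)) B R = Lval A B R + (if mult R x < 0 then t * of_int (mult R x) else 0)"
proof -
  let ?U = "\<Union>(corners ` set R)"
  let ?d = "if mult R x < 0 then t * of_int (mult R x) else 0"
  let ?term = "\<lambda>A y. if mult R y > 0 then B y * of_int (mult R y)
       else if mult R y < 0 then A y * of_int (mult R y) else 0"
  have "Lval (A(x := A x + t)) B R = (\<Sum>y\<in>?U. ?term A y + (if y = x then ?d else 0))"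
    unfolding Lval_def by (intro sum.cong) (auto simp: algebra_simps)
  also have "\<dots> = Lval A B R + (if x \<in> ?U then ?d else 0)"
    unfolding Lval_def by (simp add: sum.distrib corners_def)
  also have "\<dots> = Lval A B R + ?d"
    using mult_nonzero_imp_corner[of R x] by auto
  finally show ?thesis .
qed

lemma P_O_fun_upd_shift: "P_O D (A(x := A x + t)) B x = P_O D A B x - ereal t"
proof -
  let ?q = "\<lambda>A R. Lval A B R / of_int (- mult R x)"
  let ?Rs = "{R. R \<in> rect_unions D \<and> mult R x < 0}"
  have "P_O D (A(x := A x + t)) B x = (INF R\<in>?Rs. ereal (?q (A(x := A x + t)) R))"
    unfolding P_O_def by (simp only: setcompr_eq_image image_image)
  also have "\<dots> = (INF e\<in>(\<lambda>R. ereal (?q A R)) ` ?Rs. e - ereal t)"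
    unfolding image_image by (intro INF_cong refl) (simp add: Lval_fun_upd_shift add_divide_distrib)
  also have "\<dots> = P_O D A B x - ereal t"
    unfolding Inf_ereal_minus_real P_O_def by (simp only: setcompr_eq_image)
  finally show ?thesis .
qed

lemma gamma_fun_upd_shift: "gamma D (A(x := A x + t)) B x = gamma D A B x - ereal t"
  by (cases "P_O D A B x")
     (auto simp: gamma_def P_O_fun_upd_shift min_def)

lemma Q1_fun_upd_shift:
  assumes "Q1 D A B" and "t \<le> B x - A x"
  shows "Q1 D (A(x := A x + t)) B"
  using assms unfolding Q1_def by auto

lemma Q2_fun_upd_shift:
  assumes "Q2 D A B" and "ereal t \<le> P_O D A B x"
  shows "Q2 D (A(x := A x + t)) B"
  unfolding Q2_def
proof
  fix R assume R: "R \<in> rect_unions D"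
  show "Lval (A(x := A x + t)) B R \<ge> 0"
  proof (cases "mult R x < 0")
    case True
    have "P_O D A B x \<le> ereal (Lval A B R / of_int (- mult R x))"
      unfolding P_O_def using R True by (intro Inf_lower) blast
    with assms(2) have "ereal t \<le> ereal (Lval A B R / of_int (- mult R x))"
      by (rule order_trans)
    then have "t \<le> Lval A B R / of_int (- mult R x)"
      by (simp only: ereal_less_eq)
    moreover have "0 < real_of_int (- mult R x)"
      using True by simp
    ultimately have "t * of_int (- mult R x) \<le> Lval A B R"
      by (simp only: pos_le_divide_eq)
    then show ?thesis
      using True by (simp add: Lval_fun_upd_shift)
  next
    case False
    then show ?thesis
      using assms(1) R by (simp add: Lval_fun_upd_shift Q2_def)
  qed
qed

theorem mainTheorem11:
  fixes D :: "point set" and A B :: "point \<Rightarrow> real" and x :: point and t0 t :: real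
  assumes "is_domain D"
    and "Q1 D A B" and "Q2 D A B"
    and "x \<in> D"
    and "gamma D A B x = ereal t0" and "t0 > 0"
    and "0 < t" and "t \<le> t0"
  shows "Q1 D (A(x := A x + t)) B \<and> Q2 D (A(x := A x + t)) B \<and>
         (t = t0 \<longrightarrow> gamma D (A(x := A x + t)) B x = 0)"
proof -
  have "ereal t \<le> min (P_O D A B x) (ereal (B x - A x))"
    using assms(5,8) unfolding gamma_def by simp
  then have "ereal t \<le> P_O D A B x" and "t \<le> B x - A x"
    by simp_all
  then show ?thesis
    using assms(2,3,5)
    by (simp add: Q1_fun_upd_shift Q2_fun_upd_shift gamma_fun_upd_shift)
qed

end
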